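(* There exists a constant $C_0$ such that for every $m,\ell\ge1$, every choice of $\sigma_1\ge\sigma_2\ge\dots\ge\sigma_m\ge0$, $\rho_1\ge\rho_2\ge\dots\ge\rho_\ell>0$, $b_1,\dots,b_m>0$, $c_1,\dots,c_\ell>0$, every $1\le k\le m$, and both choices of sign, \[ \Bigl|\int_0^{\sqrt{\rho_\ell}}e^{\frac12i\lambda^2}e^{\pm i\sum_{j=1}^mb_j\sqrt{\lambda^2+\sigma_j}}\exp\Bigl(-\sum_{i=1}^\ell c_i\sqrt{\rho_i-\lambda^2}\Bigr)\frac{\lambda}{\sqrt{\lambda^2+\sigma_k}}\,d\lambda\Bigr|\le C_0\min\Bigl[(1+\sigma_1+\rho_\ell)^{1/4},\ m^{3/2}b_k^{-1}\max_{1\le j\le m}b_j\Bigr]. \] *)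

theory Defs
  imports "HOL-Analysis.Analysis"
begin

end

theory Submission
  imports Defs
begin

(*
  Write the integrand as exp(i phi) A w, where A x = exp(-sum_i c_i sqrt(rho_i - x^2)) is
  increasing with values in (0, 1], w x = x / sqrt(x^2 + sigma_k) <= 1, and the phase
  phi x = x^2/2 + s sum_j b_j sqrt(x^2 + sigma_j) has derivative x q(x), where
  q x = 1 + s G(x^2) and G u = sum_j b_j / sqrt(u + sigma_j).

  On an interval where |q| >= eta, dividing by phi' and peeling off the monotone factors A,
  1/sqrt(x^2 + sigma_k) and 1/q with the second mean value theorem bounds the integral by
  32 M / eta, where M bounds 1/sqrt(x^2 + sigma_k). For s = 1 we have q >= 1 everywhere.
  For s = -1, q = 1 - G is increasing and |q| < eta only on a window [p, p']. As G is convex,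
  (p'^2 - p^2) (-G'(p'^2)) <= G(p^2) - G(p'^2) <= 2 eta, so the window is short and the trivial
  estimate suffices there. Lower bounds for -G' where G >= 1/2, in terms of 1 + sigma_1 + rho_l
  or in terms of m and max_j b_j, give the two terms of the minimum after choosing eta.
*)

lemma monotone_mult_integral_bound:
  fixes f g :: "real \<Rightarrow> real"
  assumes f: "\<And>s t. a \<le> s \<Longrightarrow> s \<le> t \<Longrightarrow> t \<le> b \<Longrightarrow>
      f integrable_on {s..t} \<and> \<bar>integral {s..t} f\<bar> \<le> K"
    and g: "mono_on {a..b} g \<or> antimono_on {a..b} g"
    and g_bound: "\<And>x. x \<in> {a..b} \<Longrightarrow> \<bar>g x\<bar> \<le> M"
    and st: "a \<le> s" "s \<le> t" "t \<le> b"
  shows "(\<lambda>x. g x * f x) integrable_on {s..t} \<and> \<bar>integral {s..t} (\<lambda>x. g x * f x)\<bar> \<le> 2 * M * K"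
proof -
  have mono_case: "(\<lambda>x. g' x * f x) integrable_on {s..t} \<and>
      \<bar>integral {s..t} (\<lambda>x. g' x * f x)\<bar> \<le> 2 * M * K"
    if g': "mono_on {a..b} g'" "\<And>x. x \<in> {a..b} \<Longrightarrow> \<bar>g' x\<bar> \<le> M" for g'
  proof -
    have "g' x \<le> g' y" if "s \<le> x" "x \<le> y" "y \<le> t" for x y
      using g'(1) that st by (auto intro: mono_onD)
    then obtain c where c: "c \<in> {s..t}" and I:
      "((\<lambda>x. g' x * f x) has_integral g' s * integral {s..c} f + g' t * integral {c..t} f) {s..t}"
      using second_mean_value_theorem_full[of f s t g'] f[OF st] st by blast
    have "\<bar>g' s * integral {s..c} f\<bar> \<le> M * K" "\<bar>g' t * integral {c..t} f\<bar> \<le> M * K"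
      unfolding abs_mult using g'(2)[of s] g'(2)[of t] f[of s c] f[of c t] c st
      by (auto intro!: mult_mono)
    with I show ?thesis by (auto simp: integral_unique)
  qed
  from g show ?thesis
  proof
    assume "antimono_on {a..b} g"
    then have "mono_on {a..b} (\<lambda>x. - g x)" by (auto simp: monotone_on_def)
    with mono_case[of "\<lambda>x. - g x"] g_bound show ?thesis
      by (simp add: integrable_neg_iff)
  qed (use mono_case g_bound in blast)
qed

lemma derivative_integral_bound:
  fixes \<Psi> \<psi> :: "real \<Rightarrow> real"
  assumes deriv: "\<And>x. x \<in> {a..b} \<Longrightarrow> (\<Psi> has_real_derivative \<psi> x) (at x)"
    and bound: "\<And>x. x \<in> {a..b} \<Longrightarrow> \<bar>\<Psi> x\<bar> \<le> C"
    and st: "a \<le> s" "s \<le> t" "t \<le> b"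
  shows "\<psi> integrable_on {s..t} \<and> \<bar>integral {s..t} \<psi>\<bar> \<le> 2 * C"
proof -
  have "(\<psi> has_integral \<Psi> t - \<Psi> s) {s..t}"
    using st deriv
    by (intro fundamental_theorem_of_calculus)
      (auto simp: has_real_derivative_iff_has_vector_derivative[symmetric]
        intro: has_field_derivative_at_within)
  with bound[of s] bound[of t] st show ?thesis by (auto simp: integral_unique)
qed

lemma derivative_mult_monotone_integral_bound:
  fixes \<Psi> \<psi> g\<^sub>1 g\<^sub>2 g\<^sub>3 :: "real \<Rightarrow> real"
  assumes "a \<le> b"
    and \<Psi>_deriv: "\<And>x. x \<in> {a..b} \<Longrightarrow> (\<Psi> has_real_derivative \<psi> x) (at x)"
    and \<Psi>_bound: "\<And>x. x \<in> {a..b} \<Longrightarrow> \<bar>\<Psi> x\<bar> \<le> 1"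
    and g\<^sub>1: "mono_on {a..b} g\<^sub>1 \<or> antimono_on {a..b} g\<^sub>1" "\<And>x. x \<in> {a..b} \<Longrightarrow> \<bar>g\<^sub>1 x\<bar> \<le> M\<^sub>1"
    and g\<^sub>2: "mono_on {a..b} g\<^sub>2 \<or> antimono_on {a..b} g\<^sub>2" "\<And>x. x \<in> {a..b} \<Longrightarrow> \<bar>g\<^sub>2 x\<bar> \<le> M\<^sub>2"
    and g\<^sub>3: "mono_on {a..b} g\<^sub>3 \<or> antimono_on {a..b} g\<^sub>3" "\<And>x. x \<in> {a..b} \<Longrightarrow> \<bar>g\<^sub>3 x\<bar> \<le> M\<^sub>3"
  shows "(\<lambda>x. g\<^sub>3 x * (g\<^sub>2 x * (g\<^sub>1 x * \<psi> x))) integrable_on {a..b} \<and>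
    \<bar>integral {a..b} (\<lambda>x. g\<^sub>3 x * (g\<^sub>2 x * (g\<^sub>1 x * \<psi> x)))\<bar> \<le> 16 * M\<^sub>1 * M\<^sub>2 * M\<^sub>3"
proof -
  have \<psi>: "\<psi> integrable_on {s..t} \<and> \<bar>integral {s..t} \<psi>\<bar> \<le> 2 * 1"
    if "a \<le> s" "s \<le> t" "t \<le> b" for s t
    using derivative_integral_bound[OF \<Psi>_deriv \<Psi>_bound that] .
  have g\<^sub>1\<psi>: "(\<lambda>x. g\<^sub>1 x * \<psi> x) integrable_on {s..t} \<and>
      \<bar>integral {s..t} (\<lambda>x. g\<^sub>1 x * \<psi> x)\<bar> \<le> 2 * M\<^sub>1 * (2 * 1)"
    if "a \<le> s" "s \<le> t" "t \<le> b" for s t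
    using monotone_mult_integral_bound[OF \<psi> g\<^sub>1 that] by blast
  have g\<^sub>2g\<^sub>1\<psi>: "(\<lambda>x. g\<^sub>2 x * (g\<^sub>1 x * \<psi> x)) integrable_on {s..t} \<and>
      \<bar>integral {s..t} (\<lambda>x. g\<^sub>2 x * (g\<^sub>1 x * \<psi> x))\<bar> \<le> 2 * M\<^sub>2 * (2 * M\<^sub>1 * (2 * 1))"
    if "a \<le> s" "s \<le> t" "t \<le> b" for s t
    using monotone_mult_integral_bound[OF g\<^sub>1\<psi> g\<^sub>2 that] by blast
  show ?thesis
    using monotone_mult_integral_bound[OF g\<^sub>2g\<^sub>1\<psi> g\<^sub>3 order_refl \<open>a \<le> b\<close> order_refl]
    by (simp add: mult_ac)
qed

lemma monotone_inverse:
  fixes q :: "real \<Rightarrow> real"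
  assumes "mono_on S q \<or> antimono_on S q" and "(\<forall>x\<in>S. 0 < q x) \<or> (\<forall>x\<in>S. q x < 0)"
  shows "mono_on S (\<lambda>x. 1 / q x) \<or> antimono_on S (\<lambda>x. 1 / q x)"
proof -
  have inv_le: "1 / q y \<le> 1 / q x" if "x \<in> S" "y \<in> S" "q x \<le> q y" for x y
    using that assms(2) le_imp_inverse_le[of "q x" "q y"] le_imp_inverse_le_neg[of "q x" "q y"]
    by (auto simp: inverse_eq_divide)
  from assms(1) show ?thesis
  proof
    assume "mono_on S q"
    then have "antimono_on S (\<lambda>x. 1 / q x)" by (auto intro!: monotone_onI inv_le dest: mono_onD)
    then show ?thesis ..
  next
    assume "antimono_on S q"
    then have "mono_on S (\<lambda>x. 1 / q x)" by (auto intro!: monotone_onI inv_le dest: monotone_onD)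
    then show ?thesis ..
  qed
qed

lemma continuous_mono_on_threshold:
  fixes q :: "real \<Rightarrow> real"
  assumes "a \<le> b" and "continuous_on {a..b} q" and "mono_on {a..b} q"
  obtains p where "a \<le> p" "p \<le> b" "a < p \<Longrightarrow> \<forall>x\<in>{a..p}. q x \<le> \<theta>"
    "p < b \<Longrightarrow> \<forall>x\<in>{p..b}. \<theta> \<le> q x"
proof -
  have qle: "q x \<le> q y" if "a \<le> x" "x \<le> y" "y \<le> b" for x y
    using assms(3) that by (auto intro: mono_onD)
  consider "\<theta> < q a" | "q b < \<theta>" | "q a \<le> \<theta>" "\<theta> \<le> q b" by linarith
  then show ?thesis
  proof cases
    case 1
    then show ?thesis using that[of a] qle \<open>a \<le> b\<close> by force
  next
    case 2
    then show ?thesis using that[of b] qle \<open>a \<le> b\<close> by force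
  next
    case 3
    then obtain p where "p \<in> {a..b}" "q p = \<theta>"
      using IVT'[of q a \<theta> b] assms(1,2) by auto
    then show ?thesis using that[of p] qle by force
  qed
qed

lemma inverse_sqrt_diff_ge:
  fixes u v :: real
  assumes "0 < u" "u \<le> v"
  shows "(v - u) / (2 * (v * sqrt v)) \<le> 1 / sqrt u - 1 / sqrt v"
proof -
  have key: "(c\<^sup>2 - a\<^sup>2) / (2 * (c\<^sup>2 * c)) \<le> 1 / a - 1 / c" if ac: "0 < a" "a \<le> c" for a c :: real
  proof -
    have "a * a \<le> c * c" "a * c \<le> c * c"
      using ac by (auto intro: mult_mono)
    then have "(c + a) * a \<le> 2 * c\<^sup>2"
      by (simp add: power2_eq_square algebra_simps)
    then have "(c - a) * ((c + a) * a) * c \<le> (c - a) * (2 * c\<^sup>2) * c"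
      using ac by (intro mult_right_mono mult_left_mono) auto
    then show ?thesis
      using ac by (simp add: divide_simps power2_eq_square algebra_simps)
  qed
  have "0 \<le> v" using assms by linarith
  with key[of "sqrt u" "sqrt v"] assms show ?thesis by simp
qed

locale phase_integral =
  fixes m l :: nat and \<sigma> \<rho> b c :: "nat \<Rightarrow> real" and k :: nat and s :: real
  assumes m_ge_1: "1 \<le> m"
    and \<sigma>_antimono: "\<forall>i j. 1 \<le> i \<longrightarrow> i \<le> j \<longrightarrow> j \<le> m \<longrightarrow> \<sigma> j \<le> \<sigma> i"
    and \<sigma>_m_nonneg: "\<sigma> m \<ge> 0"
    and \<rho>_antimono: "\<forall>i j. 1 \<le> i \<longrightarrow> i \<le> j \<longrightarrow> j \<le> l \<longrightarrow> \<rho> j \<le> \<rho> i"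
    and \<rho>_l_pos: "\<rho> l > 0"
    and all_b_pos: "\<forall>j\<in>{1..m}. b j > 0" and all_c_nonneg: "\<forall>i\<in>{1..l}. c i \<ge> 0"
    and k_range: "k \<in> {1..m}" and s_sign: "s \<in> {1, -1}"
begin

definition "L = sqrt (\<rho> l)"
definition "A x = exp (- (\<Sum>i=1..l. c i * sqrt (\<rho> i - x\<^sup>2)))"
definition "w x = x / sqrt (x\<^sup>2 + \<sigma> k)"
definition "\<phi> x = x\<^sup>2 / 2 + s * (\<Sum>j=1..m. b j * sqrt (x\<^sup>2 + \<sigma> j))"
definition "G u = (\<Sum>j=1..m. b j / sqrt (u + \<sigma> j))"
definition "q x = 1 + s * G (x\<^sup>2)"
definition "B = Max (b ` {1..m})"
definition "F x = exp (\<i> * complex_of_real (x\<^sup>2 / 2))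
      * exp (\<i> * complex_of_real (s * (\<Sum>j=1..m. b j * sqrt (x\<^sup>2 + \<sigma> j))))
      * complex_of_real (exp (- (\<Sum>i=1..l. c i * sqrt (\<rho> i - x\<^sup>2))))
      * complex_of_real (x / sqrt (x\<^sup>2 + \<sigma> k))"

definition "X = (1 + \<sigma> 1 + \<rho> l) powr (1/4)"
definition "W = real m powr (3/2) * B / b k"

text \<open>\<open>dG u = -2 G'(u)\<close>.\<close>
definition "dG u = (\<Sum>j=1..m. b j / ((u + \<sigma> j) * sqrt (u + \<sigma> j)))"

lemma \<sigma>_nonneg: "j \<in> {1..m} \<Longrightarrow> 0 \<le> \<sigma> j"
  using \<sigma>_antimono \<sigma>_m_nonneg by force

lemma \<sigma>_le_\<sigma>_1: "j \<in> {1..m} \<Longrightarrow> \<sigma> j \<le> \<sigma> 1"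
  using \<sigma>_antimono by auto

lemma \<rho>_l_le: "i \<in> {1..l} \<Longrightarrow> \<rho> l \<le> \<rho> i"
  using \<rho>_antimono by auto

lemma b_pos: "j \<in> {1..m} \<Longrightarrow> 0 < b j"
  using all_b_pos by auto

lemma b_le_B: "j \<in> {1..m} \<Longrightarrow> b j \<le> B"
  unfolding B_def by (intro Max_ge) auto

lemma \<sigma>_k_nonneg: "0 \<le> \<sigma> k"
  using \<sigma>_nonneg k_range by auto

lemma b_k_pos: "0 < b k"
  using b_pos k_range by auto

lemma B_pos: "0 < B"
  using b_le_B[OF k_range] b_k_pos by linarith

lemma L_pos: "0 < L"
  unfolding L_def using \<rho>_l_pos by auto

lemma L_square: "L\<^sup>2 = \<rho> l"
  unfolding L_def using \<rho>_l_pos by auto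

lemma square_plus_\<sigma>_pos: "j \<in> {1..m} \<Longrightarrow> 0 < x \<Longrightarrow> 0 < x\<^sup>2 + \<sigma> j"
  using \<sigma>_nonneg by (simp add: add_pos_nonneg)

lemma A_pos: "0 < A x"
  unfolding A_def by simp

lemma A_mono_on: "mono_on {0..} A"
  unfolding A_def using all_c_nonneg
  by (auto intro!: monotone_onI sum_mono mult_left_mono power_mono)

lemma A_le_1:
  assumes "0 \<le> x" "x \<le> L"
  shows "A x \<le> 1"
proof -
  have "x\<^sup>2 \<le> \<rho> i" if "i \<in> {1..l}" for i
    using power_mono[OF assms(2,1), of 2] L_square \<rho>_l_le[OF that] by linarith
  then have "0 \<le> (\<Sum>i=1..l. c i * sqrt (\<rho> i - x\<^sup>2))"
    using all_c_nonneg by (auto intro!: sum_nonneg mult_nonneg_nonneg)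
  then show ?thesis unfolding A_def by simp
qed

lemma w_nonneg: "0 \<le> x \<Longrightarrow> 0 \<le> w x"
  unfolding w_def using \<sigma>_k_nonneg by simp

lemma w_le_1: "0 \<le> x \<Longrightarrow> w x \<le> 1"
  unfolding w_def using \<sigma>_k_nonneg
  by (cases "x = 0") (auto simp: divide_le_eq_1 real_le_rsqrt add_pos_nonneg)

lemma inverse_sqrt_le:
  assumes "0 < a" "a \<le> x"
  shows "1 / sqrt (x\<^sup>2 + \<sigma> k) \<le> 1 / a"
proof -
  have "a \<le> sqrt (x\<^sup>2 + \<sigma> k)"
    using assms \<sigma>_k_nonneg by (simp add: real_le_rsqrt power_mono add_increasing2)
  from le_imp_inverse_le[OF this assms(1)] show ?thesis by (simp add: inverse_eq_divide)
qed

lemma inverse_sqrt_antimono_on: "antimono_on {0<..} (\<lambda>x. 1 / sqrt (x\<^sup>2 + \<sigma> k))"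
  using \<sigma>_k_nonneg
  by (auto intro!: monotone_onI divide_left_mono power_mono mult_pos_pos simp: add_pos_nonneg)

lemma w_mono:
  assumes "0 \<le> x" "x \<le> y"
  shows "w x \<le> w y"
proof (cases "x = 0")
  case True
  then show ?thesis using w_nonneg assms by (simp add: w_def)
next
  case False
  then have x: "0 < x" using assms by simp
  have "x\<^sup>2 * \<sigma> k \<le> y\<^sup>2 * \<sigma> k"
    using assms \<sigma>_k_nonneg by (intro mult_right_mono power_mono) auto
  then have "(x * sqrt (y\<^sup>2 + \<sigma> k))\<^sup>2 \<le> (y * sqrt (x\<^sup>2 + \<sigma> k))\<^sup>2"
    using \<sigma>_k_nonneg by (simp add: power_mult_distrib algebra_simps)
  moreover have "0 \<le> y * sqrt (x\<^sup>2 + \<sigma> k)"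
    using assms \<sigma>_k_nonneg by simp
  ultimately have "x * sqrt (y\<^sup>2 + \<sigma> k) \<le> y * sqrt (x\<^sup>2 + \<sigma> k)"
    by (rule power2_le_imp_le)
  moreover have "0 < sqrt (x\<^sup>2 + \<sigma> k)" "0 < sqrt (y\<^sup>2 + \<sigma> k)"
    using x assms \<sigma>_k_nonneg by (simp_all add: add_pos_nonneg)
  ultimately show ?thesis unfolding w_def by (simp add: divide_simps)
qed

lemma F_eq_exp: "F x = exp (\<i> * complex_of_real (\<phi> x)) * complex_of_real (A x * w x)"
  unfolding F_def \<phi>_def A_def w_def by (simp add: exp_add[symmetric] distrib_left)

lemma F_eq_cos_sin:
  "F x = complex_of_real (cos (\<phi> x) * (A x * w x)) + \<i> * complex_of_real (sin (\<phi> x) * (A x * w x))"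
  unfolding F_eq_exp by (simp add: complex_eq_iff Re_exp Im_exp)

lemma norm_F_le: "0 \<le> x \<Longrightarrow> x \<le> L \<Longrightarrow> norm (F x) \<le> w x"
  unfolding F_eq_exp norm_mult norm_exp_i_times norm_of_real
  using A_pos[of x] A_le_1[of x] w_nonneg[of x]
  by (simp add: abs_mult mult_left_le_one_le)

text \<open>If \<open>\<sigma> k = 0\<close> then \<open>w\<close> is \<open>1\<close> except for the junk value \<open>w 0 = 0\<close>.\<close>
lemma F_integrable: "F integrable_on {0..L}"
proof (cases "\<sigma> k = 0")
  case False
  then have "sqrt (x\<^sup>2 + \<sigma> k) \<noteq> 0" for x
    using \<sigma>_k_nonneg add_nonneg_pos[of "x\<^sup>2" "\<sigma> k"] by auto
  then have "continuous_on {0..L} F"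
    unfolding F_def by (intro continuous_intros) auto
  then show ?thesis by (rule integrable_continuous_interval)
next
  case True
  define E where "E x = exp (\<i> * complex_of_real (x\<^sup>2 / 2))
      * exp (\<i> * complex_of_real (s * (\<Sum>j=1..m. b j * sqrt (x\<^sup>2 + \<sigma> j))))
      * complex_of_real (exp (- (\<Sum>i=1..l. c i * sqrt (\<rho> i - x\<^sup>2))))" for x
  have "continuous_on {0..L} E"
    unfolding E_def by (intro continuous_intros) auto
  then have "E integrable_on {0..L}" by (rule integrable_continuous_interval)
  moreover have "F x = E x" if "x \<in> {0..L} - {0}" for x
    using that True unfolding F_def E_def by simp
  ultimately show ?thesis
    using integrable_spike_finite[of "{0}" "{0..L}" F E] by blast
qed

lemma integral_F_split:
  assumes "0 \<le> x" "x \<le> y" "y \<le> z" "z \<le> L"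
  shows "integral {x..z} F = integral {x..y} F + integral {y..z} F"
proof -
  have "F integrable_on {x..z}"
    using assms by (intro integrable_subinterval_real[OF F_integrable]) auto
  with assms show ?thesis by (simp add: Henstock_Kurzweil_Integration.integral_combine)
qed

lemma norm_integral_F_le:
  assumes "0 \<le> \<alpha>" "\<alpha> \<le> \<beta>" "\<beta> \<le> L"
  shows "norm (integral {\<alpha>..\<beta>} F) \<le> (\<beta> - \<alpha>) * w \<beta>"
proof -
  have "F integrable_on {\<alpha>..\<beta>}"
    using assms by (intro integrable_subinterval_real[OF F_integrable]) auto
  moreover have "norm (F x) \<le> w \<beta>" if "x \<in> {\<alpha>..\<beta>} - {}" for x
    using that assms norm_F_le[of x] w_mono[of x \<beta>] by auto
  ultimately have "norm (integral {\<alpha>..\<beta>} F) \<le> w \<beta> * Henstock_Kurzweil_Integration.content {\<alpha>..\<beta>}"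
    using w_nonneg[of \<beta>] assms by (intro has_integral_bound_real[of _ "{}"]) auto
  with assms show ?thesis by (simp add: mult.commute)
qed

lemma norm_integral_F_le_length:
  "0 \<le> \<alpha> \<Longrightarrow> \<alpha> \<le> \<beta> \<Longrightarrow> \<beta> \<le> L \<Longrightarrow> norm (integral {\<alpha>..\<beta>} F) \<le> \<beta> - \<alpha>"
  using norm_integral_F_le w_le_1[of \<beta>] mult_left_le[of "w \<beta>" "\<beta> - \<alpha>"] by force

lemma norm_integral_F_le_square_diff:
  assumes "0 \<le> \<alpha>" "\<alpha> \<le> \<beta>" "\<beta> \<le> L"
  shows "norm (integral {\<alpha>..\<beta>} F) \<le> (\<beta>\<^sup>2 - \<alpha>\<^sup>2) * (1 / sqrt (\<beta>\<^sup>2 + \<sigma> k))"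
proof -
  have "(\<beta> - \<alpha>) * \<beta> \<le> (\<beta> - \<alpha>) * (\<beta> + \<alpha>)"
    using assms by (intro mult_left_mono) auto
  then have le: "(\<beta> - \<alpha>) * \<beta> \<le> \<beta>\<^sup>2 - \<alpha>\<^sup>2"
    by (simp add: power2_eq_square algebra_simps)
  have "(\<beta> - \<alpha>) * w \<beta> \<le> (\<beta>\<^sup>2 - \<alpha>\<^sup>2) * (1 / sqrt (\<beta>\<^sup>2 + \<sigma> k))"
    unfolding w_def using divide_right_mono[OF le, of "sqrt (\<beta>\<^sup>2 + \<sigma> k)"] \<sigma>_k_nonneg by simp
  with norm_integral_F_le[OF assms] show ?thesis by linarith
qed

lemma norm_integral_F_le_from:
  assumes "0 \<le> a" "0 \<le> R" and "a \<le> L \<Longrightarrow> norm (integral {a..L} F) \<le> R"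
  shows "norm (integral {0..L} F) \<le> a + R"
proof (cases "a \<le> L")
  case True
  then have "norm (integral {0..L} F) \<le> norm (integral {0..a} F) + norm (integral {a..L} F)"
    using assms integral_F_split[of 0 a L] by (simp add: norm_triangle_ineq)
  then show ?thesis
    using True assms norm_integral_F_le_length[of 0 a] by linarith
next
  case False
  then show ?thesis
    using assms norm_integral_F_le_length[of 0 L] L_pos by linarith
qed

lemma \<phi>_deriv:
  assumes "0 < x"
  shows "(\<phi> has_real_derivative x * q x) (at x)"
proof -
  have "((\<lambda>x. b j * sqrt (x\<^sup>2 + \<sigma> j)) has_real_derivative b j * (x / sqrt (x\<^sup>2 + \<sigma> j))) (at x)"
    if "j \<in> {1..m}" for j
    using square_plus_\<sigma>_pos[OF that assms] by (auto intro!: derivative_eq_intros simp: field_simps)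
  then have "((\<lambda>x. \<Sum>j=1..m. b j * sqrt (x\<^sup>2 + \<sigma> j)) has_real_derivative
      (\<Sum>j=1..m. b j * (x / sqrt (x\<^sup>2 + \<sigma> j)))) (at x)"
    by (rule DERIV_sum)
  moreover have "((\<lambda>x. x\<^sup>2 / 2) has_real_derivative x) (at x)"
    by (auto intro!: derivative_eq_intros)
  ultimately have "(\<phi> has_real_derivative x + s * (\<Sum>j=1..m. b j * (x / sqrt (x\<^sup>2 + \<sigma> j)))) (at x)"
    unfolding \<phi>_def by (intro DERIV_add DERIV_cmult)
  then show ?thesis
    unfolding q_def G_def by (simp add: algebra_simps sum_distrib_left)
qed

lemma q_continuous_on:
  assumes "0 < a"
  shows "continuous_on {a..b'} q"
proof -
  have "sqrt (x\<^sup>2 + \<sigma> j) \<noteq> 0" if "j \<in> {1..m}" "x \<in> {a..b'}" for j x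
    using square_plus_\<sigma>_pos[of j x] that assms by auto
  then show ?thesis
    unfolding q_def G_def by (intro continuous_intros) auto
qed

lemma G_square_antimono:
  assumes "0 < x" "x \<le> y"
  shows "G (y\<^sup>2) \<le> G (x\<^sup>2)"
  unfolding G_def
proof (intro sum_mono divide_left_mono)
  fix j assume j: "j \<in> {1..m}"
  show "sqrt (x\<^sup>2 + \<sigma> j) \<le> sqrt (y\<^sup>2 + \<sigma> j)"
    using assms by (simp add: power_mono)
  show "0 < sqrt (y\<^sup>2 + \<sigma> j) * sqrt (x\<^sup>2 + \<sigma> j)" "0 \<le> b j"
    using square_plus_\<sigma>_pos[OF j] assms b_pos[OF j] by auto
qed

lemma G_pos: "0 < x \<Longrightarrow> 0 < G (x\<^sup>2)"
  unfolding G_def using b_pos square_plus_\<sigma>_pos m_ge_1 by (intro sum_pos) auto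

lemma q_monotone: "0 < a \<Longrightarrow> mono_on {a..b'} q \<or> antimono_on {a..b'} q"
  using s_sign G_square_antimono unfolding q_def by (auto intro!: monotone_onI)

lemma b_k_div_le_G: "0 < x \<Longrightarrow> b k / sqrt (x\<^sup>2 + \<sigma> k) \<le> G (x\<^sup>2)"
  unfolding G_def using k_range b_pos square_plus_\<sigma>_pos
  by (intro member_le_sum) (auto intro!: divide_nonneg_nonneg simp: less_imp_le)

text \<open>Convexity of \<open>G\<close>: its decrease over \<open>[\<alpha>\<^sup>2, \<beta>\<^sup>2]\<close> dominates the slope at the right end.\<close>
lemma G_diff_ge:
  assumes "0 < \<alpha>" "\<alpha> \<le> \<beta>"
  shows "(\<beta>\<^sup>2 - \<alpha>\<^sup>2) / 2 * dG (\<beta>\<^sup>2) \<le> G (\<alpha>\<^sup>2) - G (\<beta>\<^sup>2)"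
proof -
  have "(\<beta>\<^sup>2 - \<alpha>\<^sup>2) / 2 * dG (\<beta>\<^sup>2)
      = (\<Sum>j=1..m. b j * (((\<beta>\<^sup>2 + \<sigma> j) - (\<alpha>\<^sup>2 + \<sigma> j)) / (2 * ((\<beta>\<^sup>2 + \<sigma> j) * sqrt (\<beta>\<^sup>2 + \<sigma> j)))))"
    unfolding dG_def by (simp add: sum_distrib_left field_simps)
  also have "\<dots> \<le> (\<Sum>j=1..m. b j * (1 / sqrt (\<alpha>\<^sup>2 + \<sigma> j) - 1 / sqrt (\<beta>\<^sup>2 + \<sigma> j)))"
    using assms square_plus_\<sigma>_pos b_pos
    by (intro sum_mono mult_left_mono inverse_sqrt_diff_ge) (auto simp: power_mono less_imp_le)
  also have "\<dots> = G (\<alpha>\<^sup>2) - G (\<beta>\<^sup>2)"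
    unfolding G_def by (simp add: sum_subtractf algebra_simps)
  finally show ?thesis .
qed

text \<open>Since \<open>\<Psi>' = T \<phi>'\<close> and \<open>\<phi>'(x) = x q(x)\<close>, the integrand \<open>T A w\<close> is \<open>\<Psi>'\<close> times the three
  monotone factors \<open>1 / q\<close>, \<open>1 / sqrt (x\<^sup>2 + \<sigma> k)\<close> and \<open>A\<close>.\<close>
lemma oscillatory_integral_bound:
  assumes \<alpha>\<beta>: "0 < \<alpha>" "\<alpha> \<le> \<beta>" "\<beta> \<le> L" and "0 < \<eta>"
    and q_sign: "(\<forall>x\<in>{\<alpha>..\<beta>}. \<eta> \<le> q x) \<or> (\<forall>x\<in>{\<alpha>..\<beta>}. q x \<le> -\<eta>)"
    and M: "\<And>x. x \<in> {\<alpha>..\<beta>} \<Longrightarrow> 1 / sqrt (x\<^sup>2 + \<sigma> k) \<le> M"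
    and \<Psi>_deriv: "\<And>x. x \<in> {\<alpha>..\<beta>} \<Longrightarrow> (\<Psi> has_real_derivative T x * (x * q x)) (at x)"
    and \<Psi>_bound: "\<And>x. \<bar>\<Psi> x\<bar> \<le> 1"
  shows "(\<lambda>x. T x * (A x * w x)) integrable_on {\<alpha>..\<beta>} \<and>
    \<bar>integral {\<alpha>..\<beta>} (\<lambda>x. T x * (A x * w x))\<bar> \<le> 16 * M / \<eta>"
proof -
  have q_abs: "\<eta> \<le> \<bar>q x\<bar>" if "x \<in> {\<alpha>..\<beta>}" for x
    using q_sign that by force
  have "mono_on {\<alpha>..\<beta>} (\<lambda>x. 1 / q x) \<or> antimono_on {\<alpha>..\<beta>} (\<lambda>x. 1 / q x)"
    using q_sign \<open>0 < \<eta>\<close> by (intro monotone_inverse q_monotone \<alpha>\<beta>(1)) force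
  moreover have "\<bar>1 / q x\<bar> \<le> 1 / \<eta>" if "x \<in> {\<alpha>..\<beta>}" for x
    using q_abs[OF that] \<open>0 < \<eta>\<close> by (simp add: divide_simps)
  moreover have
    "mono_on {\<alpha>..\<beta>} (\<lambda>x. 1 / sqrt (x\<^sup>2 + \<sigma> k)) \<or> antimono_on {\<alpha>..\<beta>} (\<lambda>x. 1 / sqrt (x\<^sup>2 + \<sigma> k))"
    using \<alpha>\<beta> by (intro disjI2 monotone_on_subset[OF inverse_sqrt_antimono_on]) auto
  moreover have "\<bar>1 / sqrt (x\<^sup>2 + \<sigma> k)\<bar> \<le> M" if "x \<in> {\<alpha>..\<beta>}" for x
    using M[OF that] \<sigma>_k_nonneg by simp
  moreover have "mono_on {\<alpha>..\<beta>} A \<or> antimono_on {\<alpha>..\<beta>} A"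
    using \<alpha>\<beta> by (intro disjI1 monotone_on_subset[OF A_mono_on]) auto
  moreover have "\<bar>A x\<bar> \<le> 1" if "x \<in> {\<alpha>..\<beta>}" for x
    using that \<alpha>\<beta> A_pos[of x] A_le_1[of x] by simp
  ultimately have "(\<lambda>x. A x * (1 / sqrt (x\<^sup>2 + \<sigma> k) * (1 / q x * (T x * (x * q x))))) integrable_on {\<alpha>..\<beta>} \<and>
      \<bar>integral {\<alpha>..\<beta>} (\<lambda>x. A x * (1 / sqrt (x\<^sup>2 + \<sigma> k) * (1 / q x * (T x * (x * q x)))))\<bar>
        \<le> 16 * (1 / \<eta>) * M * 1"
    using \<alpha>\<beta>(2) \<Psi>_deriv \<Psi>_bound by (intro derivative_mult_monotone_integral_bound)
  moreover have integrand:
    "A x * (1 / sqrt (x\<^sup>2 + \<sigma> k) * (1 / q x * (T x * (x * q x)))) = T x * (A x * w x)"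
    if "x \<in> {\<alpha>..\<beta>}" for x
    using q_abs[OF that] \<open>0 < \<eta>\<close> that \<alpha>\<beta>(1) unfolding w_def by (auto simp: field_simps)
  ultimately show ?thesis
    by (simp only: integrable_cong[OF integrand] integral_cong[OF integrand]) simp
qed

lemma norm_integral_F_nonstationary:
  assumes \<alpha>\<beta>: "0 < \<alpha>" "\<alpha> \<le> \<beta>" "\<beta> \<le> L" and "0 < \<eta>" "0 \<le> M"
    and q_sign: "\<alpha> < \<beta> \<Longrightarrow> (\<forall>x\<in>{\<alpha>..\<beta>}. \<eta> \<le> q x) \<or> (\<forall>x\<in>{\<alpha>..\<beta>}. q x \<le> -\<eta>)"
    and M: "\<And>x. \<alpha> < \<beta> \<Longrightarrow> x \<in> {\<alpha>..\<beta>} \<Longrightarrow> 1 / sqrt (x\<^sup>2 + \<sigma> k) \<le> M"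
  shows "norm (integral {\<alpha>..\<beta>} F) \<le> 32 * M / \<eta>"
proof (cases "\<alpha> = \<beta>")
  case True
  then show ?thesis using assms by simp
next
  case False
  then have "\<alpha> < \<beta>" using \<alpha>\<beta> by simp
  have "((\<lambda>x. sin (\<phi> x)) has_real_derivative cos (\<phi> x) * (x * q x)) (at x)"
    "((\<lambda>x. - cos (\<phi> x)) has_real_derivative sin (\<phi> x) * (x * q x)) (at x)"
    if "x \<in> {\<alpha>..\<beta>}" for x
    using \<phi>_deriv[of x] that \<alpha>\<beta> by (auto intro!: derivative_eq_intros)
  note cos_part = oscillatory_integral_bound[OF \<alpha>\<beta> \<open>0 < \<eta>\<close> q_sign[OF \<open>\<alpha> < \<beta>\<close>]
      M[OF \<open>\<alpha> < \<beta>\<close>] this(1)]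
    and sin_part = oscillatory_integral_bound[OF \<alpha>\<beta> \<open>0 < \<eta>\<close> q_sign[OF \<open>\<alpha> < \<beta>\<close>]
      M[OF \<open>\<alpha> < \<beta>\<close>] this(2)]
  define I1 I2 where
    "I1 = integral {\<alpha>..\<beta>} (\<lambda>x. cos (\<phi> x) * (A x * w x))" and
    "I2 = integral {\<alpha>..\<beta>} (\<lambda>x. sin (\<phi> x) * (A x * w x))"
  have "(F has_integral complex_of_real I1 + \<i> * complex_of_real I2) {\<alpha>..\<beta>}"
    unfolding F_eq_cos_sin[abs_def] I1_def I2_def using cos_part sin_part
    by (intro has_integral_add has_integral_mult_right has_integral_of_real) auto
  then have "norm (integral {\<alpha>..\<beta>} F) \<le> \<bar>I1\<bar> + \<bar>I2\<bar>"
    using norm_triangle_ineq[of "complex_of_real I1" "\<i> * complex_of_real I2"]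
    by (simp add: integral_unique norm_mult)
  with cos_part sin_part show ?thesis unfolding I1_def I2_def by simp
qed

lemma G_div_le_dG:
  assumes "0 < \<beta>" "\<beta> \<le> L"
  shows "G (\<beta>\<^sup>2) / (1 + \<sigma> 1 + \<rho> l) \<le> dG (\<beta>\<^sup>2)"
proof -
  have "G (\<beta>\<^sup>2) / (1 + \<sigma> 1 + \<rho> l) = (\<Sum>j=1..m. b j / ((1 + \<sigma> 1 + \<rho> l) * sqrt (\<beta>\<^sup>2 + \<sigma> j)))"
    unfolding G_def sum_divide_distrib by (simp add: ac_simps)
  also have "\<dots> \<le> dG (\<beta>\<^sup>2)"
    unfolding dG_def
  proof (intro sum_mono divide_left_mono mult_right_mono)
    fix j assume j: "j \<in> {1..m}"
    have "\<beta>\<^sup>2 \<le> \<rho> l"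
      using assms L_square power_mono[of \<beta> L 2] by simp
    then show "\<beta>\<^sup>2 + \<sigma> j \<le> 1 + \<sigma> 1 + \<rho> l"
      using \<sigma>_le_\<sigma>_1[OF j] by linarith
    show "0 \<le> b j" "0 \<le> sqrt (\<beta>\<^sup>2 + \<sigma> j)"
      using b_pos[OF j] square_plus_\<sigma>_pos[OF j assms(1)] by auto
    show "0 < (1 + \<sigma> 1 + \<rho> l) * sqrt (\<beta>\<^sup>2 + \<sigma> j) * ((\<beta>\<^sup>2 + \<sigma> j) * sqrt (\<beta>\<^sup>2 + \<sigma> j))"
      using square_plus_\<sigma>_pos[OF j assms(1)] \<sigma>_nonneg[of 1] m_ge_1 \<rho>_l_pos by simp
  qed
  finally show ?thesis .
qed

text \<open>Some term of \<open>G\<close> is at least \<open>1/(2m)\<close>; cubing it gives a term of \<open>dG\<close>.\<close>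
lemma dG_ge:
  assumes "0 < \<beta>" "1/2 \<le> G (\<beta>\<^sup>2)"
  shows "1 / (8 * real m ^ 3 * B\<^sup>2) \<le> dG (\<beta>\<^sup>2)"
proof -
  have "\<exists>j\<in>{1..m}. 1 / (2 * real m) \<le> b j / sqrt (\<beta>\<^sup>2 + \<sigma> j)"
  proof (rule ccontr)
    assume "\<not> ?thesis"
    then have "G (\<beta>\<^sup>2) < (\<Sum>j=1..m. 1 / (2 * real m))"
      unfolding G_def using m_ge_1 by (intro sum_strict_mono) (auto simp: not_le)
    also have "\<dots> = 1/2"
      using m_ge_1 by simp
    finally show False
      using assms(2) by simp
  qed
  then obtain j where j: "j \<in> {1..m}" and a: "1 / (2 * real m) \<le> b j / sqrt (\<beta>\<^sup>2 + \<sigma> j)" ..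
  define r where "r = sqrt (\<beta>\<^sup>2 + \<sigma> j)"
  have r: "0 < r" "r\<^sup>2 = \<beta>\<^sup>2 + \<sigma> j"
    using square_plus_\<sigma>_pos[OF j assms(1)] by (auto simp: r_def)
  have "1 / (8 * real m ^ 3 * B\<^sup>2) = (1 / (2 * real m)) ^ 3 / B\<^sup>2"
    by (simp add: power_divide power_mult_distrib)
  also have "\<dots> \<le> (b j / r) ^ 3 / (b j)\<^sup>2"
  proof (rule frac_le)
    show "(1 / (2 * real m)) ^ 3 \<le> (b j / r) ^ 3"
      using a unfolding r_def[symmetric] by (intro power_mono) auto
    show "(b j)\<^sup>2 \<le> B\<^sup>2"
      using b_pos[OF j] b_le_B[OF j] by (intro power_mono) auto
  qed (use r b_pos[OF j] in auto)
  also have "\<dots> = b j / ((\<beta>\<^sup>2 + \<sigma> j) * sqrt (\<beta>\<^sup>2 + \<sigma> j))"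
    using r b_pos[OF j] unfolding r_def[symmetric] r(2)[symmetric]
    by (simp add: field_simps power2_eq_square power3_eq_cube)
  also have "\<dots> \<le> dG (\<beta>\<^sup>2)"
    unfolding dG_def using j square_plus_\<sigma>_pos[OF _ assms(1)] b_pos
    by (intro member_le_sum) (auto intro!: divide_nonneg_nonneg simp: less_imp_le)
  finally show ?thesis .
qed

lemma norm_integral_F_plus_bound:
  assumes "s = 1"
  shows "norm (integral {0..L} F) \<le> 33"
proof -
  have "1 \<le> q x" if "0 < x" for x
    using G_pos[OF that] assms unfolding q_def by simp
  then have "norm (integral {1..L} F) \<le> 32 * 1 / 1" if "1 \<le> L"
    using that by (intro norm_integral_F_nonstationary inverse_sqrt_le[of 1, simplified]) auto
  with norm_integral_F_le_from[of 1 32] show ?thesis by simp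
qed

lemma norm_integral_F_stationary_window:
  assumes s: "s = -1" and p: "0 < p" "p \<le> p'" "p' \<le> L" and q: "-\<eta> \<le> q p" "q p' \<le> \<eta>"
    and "0 < \<eta>" "\<eta> \<le> 1/2" "0 < D" and D: "1/2 \<le> G (p'\<^sup>2) \<Longrightarrow> D \<le> dG (p'\<^sup>2)"
    and M: "1 / sqrt (p'\<^sup>2 + \<sigma> k) \<le> M"
  shows "norm (integral {p..p'} F) \<le> 4 * \<eta> * M / D"
proof -
  have G_drop: "G (p\<^sup>2) - G (p'\<^sup>2) \<le> 2 * \<eta>" and "1/2 \<le> G (p'\<^sup>2)"
    using q s \<open>\<eta> \<le> 1/2\<close> unfolding q_def by auto
  then have "(p'\<^sup>2 - p\<^sup>2) * D \<le> (p'\<^sup>2 - p\<^sup>2) * dG (p'\<^sup>2)"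
    using D p by (intro mult_left_mono) (auto simp: power_mono)
  also have "\<dots> \<le> 4 * \<eta>"
    using G_diff_ge[of p p'] G_drop p by simp
  finally have width: "p'\<^sup>2 - p\<^sup>2 \<le> 4 * \<eta> / D"
    using \<open>0 < D\<close> by (simp add: field_simps)
  have "norm (integral {p..p'} F) \<le> (p'\<^sup>2 - p\<^sup>2) * (1 / sqrt (p'\<^sup>2 + \<sigma> k))"
    using p by (intro norm_integral_F_le_square_diff) auto
  also have "\<dots> \<le> (4 * \<eta> / D) * M"
    using width M p \<sigma>_k_nonneg \<open>0 < \<eta>\<close> \<open>0 < D\<close> by (intro mult_mono) auto
  finally show ?thesis by simp
qed

text \<open>For \<open>s = -1\<close> the function \<open>q = 1 - G\<close> increases, so \<open>[a, L]\<close> splits into a part where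
  \<open>q \<le> -\<eta>\<close>, a stationary window, and a part where \<open>q \<ge> \<eta>\<close>.\<close>
lemma norm_integral_F_minus_bound:
  assumes s: "s = -1" and a: "0 < a" "a \<le> L" and \<eta>: "0 < \<eta>" "\<eta> \<le> 1/2" and "0 < D"
    and M: "\<And>x. x \<in> {a..L} \<Longrightarrow> 1 / sqrt (x\<^sup>2 + \<sigma> k) \<le> M"
    and D: "\<And>x. x \<in> {a..L} \<Longrightarrow> 1/2 \<le> G (x\<^sup>2) \<Longrightarrow> D \<le> dG (x\<^sup>2)"
  shows "norm (integral {a..L} F) \<le> 64 * M / \<eta> + 4 * \<eta> * M / D"
proof -
  have "0 \<le> M"
    using M[of a] a \<sigma>_k_nonneg by (auto intro: order.trans[rotated])
  have q_mono: "mono_on {a..L} q"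
    using s G_square_antimono a unfolding q_def by (auto intro!: monotone_onI)
  obtain p where p: "a \<le> p" "p \<le> L" "a < p \<Longrightarrow> \<forall>x\<in>{a..p}. q x \<le> -\<eta>"
      "p < L \<Longrightarrow> \<forall>x\<in>{p..L}. -\<eta> \<le> q x"
    using continuous_mono_on_threshold[OF a(2) q_continuous_on[OF a(1)] q_mono, where \<theta> = "-\<eta>"]
    by blast
  obtain p' where p': "p \<le> p'" "p' \<le> L" "p < p' \<Longrightarrow> \<forall>x\<in>{p..p'}. q x \<le> \<eta>"
      "p' < L \<Longrightarrow> \<forall>x\<in>{p'..L}. \<eta> \<le> q x"
    using continuous_mono_on_threshold[OF p(2) q_continuous_on mono_on_subset[OF q_mono], where \<theta> = \<eta>]
      p a by auto
  have "norm (integral {a..p} F) \<le> 32 * M / \<eta>" "norm (integral {p'..L} F) \<le> 32 * M / \<eta>"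
    using a p p' \<eta> M \<open>0 \<le> M\<close> by (intro norm_integral_F_nonstationary; auto)+
  moreover have "norm (integral {p..p'} F) \<le> 4 * \<eta> * M / D"
  proof (cases "p < p'")
    case True
    then show ?thesis
      using s a p p' \<eta> \<open>0 < D\<close> D M by (intro norm_integral_F_stationary_window) auto
  qed (use p' \<eta> \<open>0 \<le> M\<close> \<open>0 < D\<close> in simp)
  moreover have "integral {a..L} F = integral {a..p} F + integral {p..p'} F + integral {p'..L} F"
    using a p p' integral_F_split[of a p L] integral_F_split[of p p' L] by simp
  then have "norm (integral {a..L} F)
      \<le> norm (integral {a..p} F) + norm (integral {p..p'} F) + norm (integral {p'..L} F)"
    by (metis norm_triangle_ineq order.trans add_right_mono)
  ultimately show ?thesis by simp
qed

lemma X_ge_1: "1 \<le> X"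
  unfolding X_def using \<sigma>_nonneg[of 1] m_ge_1 \<rho>_l_pos by (simp add: ge_one_powr_ge_zero)

lemma X_pow_4: "X ^ 4 = 1 + \<sigma> 1 + \<rho> l"
  unfolding X_def using \<sigma>_nonneg[of 1] m_ge_1 \<rho>_l_pos by (simp flip: powr_realpow add: powr_powr)

lemma W_ge_1: "1 \<le> W"
proof -
  have "1 \<le> real m powr (3/2)"
    using m_ge_1 by (simp add: ge_one_powr_ge_zero)
  then have "B \<le> real m powr (3/2) * B"
    using mult_right_mono[of 1 "real m powr (3/2)" B] B_pos by simp
  with b_le_B[OF k_range] have "b k \<le> real m powr (3/2) * B"
    by linarith
  with b_k_pos show ?thesis
    unfolding W_def by (simp add: le_divide_eq_1_pos)
qed

lemma norm_integral_F_minus_bound_X: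
  assumes "s = -1"
  shows "norm (integral {0..L} F) \<le> 133 * X"
proof -
  define \<eta> where "\<eta> = 1 / (2 * X\<^sup>2)"
  have X: "0 < X" "1 \<le> X\<^sup>2"
    using X_ge_1 by (auto simp: one_le_power)
  have "norm (integral {X..L} F) \<le> 64 * (1 / X) / \<eta> + 4 * \<eta> * (1 / X) / (1 / (2 * X ^ 4))"
    if "X \<le> L"
  proof (rule norm_integral_F_minus_bound[OF assms X(1) that])
    show "0 < \<eta>" "\<eta> \<le> 1/2"
      using X unfolding \<eta>_def by (auto simp: divide_simps)
    show "1 / sqrt (x\<^sup>2 + \<sigma> k) \<le> 1 / X" if "x \<in> {X..L}" for x
      using that X by (intro inverse_sqrt_le) auto
    show "1 / (2 * X ^ 4) \<le> dG (x\<^sup>2)" if "x \<in> {X..L}" "1/2 \<le> G (x\<^sup>2)" for x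
    proof -
      have "1 / (2 * X ^ 4) \<le> G (x\<^sup>2) / X ^ 4"
        using divide_right_mono[OF that(2), of "X ^ 4"] X by simp
      also have "\<dots> \<le> dG (x\<^sup>2)"
        using G_div_le_dG[of x] that(1) X unfolding X_pow_4 by simp
      finally show ?thesis .
    qed
  qed (use X in simp)
  also have "64 * (1 / X) / \<eta> + 4 * \<eta> * (1 / X) / (1 / (2 * X ^ 4)) = 132 * X"
    unfolding \<eta>_def using X by (simp add: field_simps power2_eq_square power4_eq_xxxx)
  finally show ?thesis
    using norm_integral_F_le_from[of X "132 * X"] X by simp
qed

lemma norm_integral_F_minus_tail_bound_W:
  assumes s: "s = -1" and p: "1 \<le> p" "p \<le> L" and q: "\<forall>x\<in>{p..L}. -1 \<le> q x"
  shows "norm (integral {p..L} F) \<le> 320 * W"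
proof -
  define V where "V = real m powr (3/2) * B"
  define \<eta> where "\<eta> = 1 / (V + 2)"
  define M where "M = min 1 (2 / b k)"
  have "(real m powr (3/2))\<^sup>2 = real m ^ 3"
    using m_ge_1 by (simp add: power2_eq_square flip: powr_add)
  then have V: "0 < V" "V\<^sup>2 = real m ^ 3 * B\<^sup>2" "W = V / b k"
    using m_ge_1 B_pos unfolding V_def W_def by (simp_all add: power_mult_distrib)
  have M: "1 / sqrt (x\<^sup>2 + \<sigma> k) \<le> M" if "x \<in> {p..L}" for x
  proof -
    have "b k / sqrt (x\<^sup>2 + \<sigma> k) \<le> 2"
      using b_k_div_le_G[of x] q that p(1) s unfolding q_def by force
    then have "1 / sqrt (x\<^sup>2 + \<sigma> k) \<le> 2 / b k"
      using b_k_pos by (simp add: divide_simps mult.commute)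
    with that p(1) inverse_sqrt_le[of 1 x] show ?thesis
      unfolding M_def by simp
  qed
  have "norm (integral {p..L} F) \<le> 64 * M / \<eta> + 4 * \<eta> * M / (1 / (8 * real m ^ 3 * B\<^sup>2))"
    using p V(1) M m_ge_1 B_pos dG_ge unfolding \<eta>_def
    by (intro norm_integral_F_minus_bound[OF s]) (auto simp: divide_simps)
  also have "\<dots> \<le> 320 * W"
  proof -
    have "M * V \<le> 2 / b k * V"
      using V(1) unfolding M_def by (intro mult_right_mono) auto
    then have M_le: "M \<le> 1" "M * V \<le> 2 * W"
      using V(3) unfolding M_def by auto
    have "64 * M / \<eta> = 64 * (M * V) + 128 * M"
      unfolding \<eta>_def by (simp add: algebra_simps)
    also have "\<dots> \<le> 256 * W"
      using M_le W_ge_1 by linarith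
    finally have nonstationary: "64 * M / \<eta> \<le> 256 * W" .
    have "4 * \<eta> * M / (1 / (8 * real m ^ 3 * B\<^sup>2)) = 32 * (M * V) * (V / (V + 2))"
      unfolding \<eta>_def using V(2) by (simp add: field_simps power2_eq_square)
    also have "\<dots> \<le> 32 * (2 * W) * 1"
      by (rule mult_mono) (use M_le V(1) W_ge_1 in \<open>auto simp: divide_simps\<close>)
    finally show ?thesis
      using nonstationary by linarith
  qed
  finally show ?thesis .
qed

lemma norm_integral_F_minus_bound_W:
  assumes s: "s = -1"
  shows "norm (integral {0..L} F) \<le> 353 * W"
proof -
  have "norm (integral {1..L} F) \<le> 32 + 320 * W" if L: "1 \<le> L"
  proof -
    have q_mono: "mono_on {1..L} q"
      using s G_square_antimono unfolding q_def by (auto intro!: monotone_onI)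
    obtain p where p: "1 \<le> p" "p \<le> L" "1 < p \<Longrightarrow> \<forall>x\<in>{1..p}. q x \<le> -1"
        "p < L \<Longrightarrow> \<forall>x\<in>{p..L}. -1 \<le> q x"
      using continuous_mono_on_threshold[OF L q_continuous_on[OF zero_less_one] q_mono, where \<theta> = "-1"]
      by auto
    have "norm (integral {1..p} F) \<le> 32 * 1 / 1"
      using p by (intro norm_integral_F_nonstationary inverse_sqrt_le[of 1, simplified]) auto
    moreover have "norm (integral {p..L} F) \<le> 320 * W"
    proof (cases "p < L")
      case True
      then show ?thesis
        using s p by (intro norm_integral_F_minus_tail_bound_W) auto
    qed (use p W_ge_1 in simp)
    moreover have "norm (integral {1..L} F) \<le> norm (integral {1..p} F) + norm (integral {p..L} F)"
      using integral_F_split[of 1 p L] p by (simp add: norm_triangle_ineq)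
    ultimately show ?thesis by simp
  qed
  with norm_integral_F_le_from[of 1 "32 + 320 * W"] W_ge_1 show ?thesis by simp
qed

lemma norm_integral_F_bound: "norm (integral {0..L} F) \<le> 353 * min X W"
proof (cases "s = 1")
  case True
  then show ?thesis
    using norm_integral_F_plus_bound X_ge_1 W_ge_1 by simp
next
  case False
  then have "s = -1" using s_sign by simp
  then show ?thesis
    using norm_integral_F_minus_bound_X norm_integral_F_minus_bound_W X_ge_1
    by (auto simp: min_def)
qed

end

theorem lemma7p5:
  shows "\<exists>C0::real. \<forall>(m::nat) (l::nat) (\<sigma>::nat \<Rightarrow> real) (\<rho>::nat \<Rightarrow> real)
      (b::nat \<Rightarrow> real) (c::nat \<Rightarrow> real) (k::nat) (s::real).
    1 \<le> m \<longrightarrow> 1 \<le> l \<longrightarrow>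
    (\<forall>i j. 1 \<le> i \<longrightarrow> i \<le> j \<longrightarrow> j \<le> m \<longrightarrow> \<sigma> j \<le> \<sigma> i) \<longrightarrow> \<sigma> m \<ge> 0 \<longrightarrow>
    (\<forall>i j. 1 \<le> i \<longrightarrow> i \<le> j \<longrightarrow> j \<le> l \<longrightarrow> \<rho> j \<le> \<rho> i) \<longrightarrow> \<rho> l > 0 \<longrightarrow>
    (\<forall>j\<in>{1..m}. b j > 0) \<longrightarrow> (\<forall>i\<in>{1..l}. c i > 0) \<longrightarrow>
    k \<in> {1..m} \<longrightarrow> s \<in> {1, -1} \<longrightarrow>
    norm (integral {0..sqrt (\<rho> l)} (\<lambda>x::real.
        exp (\<i> * complex_of_real (x\<^sup>2 / 2))
      * exp (\<i> * complex_of_real (s * (\<Sum>j=1..m. b j * sqrt (x\<^sup>2 + \<sigma> j))))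
      * complex_of_real (exp (- (\<Sum>i=1..l. c i * sqrt (\<rho> i - x\<^sup>2))))
      * complex_of_real (x / sqrt (x\<^sup>2 + \<sigma> k))))
    \<le> C0 * min ((1 + \<sigma> 1 + \<rho> l) powr (1/4))
                 (real m powr (3/2) * Max (b ` {1..m}) / b k)"
proof (intro exI[of _ 353] allI impI, goal_cases)
  case (1 m l \<sigma> \<rho> b c k s)
  then interpret phase_integral m l \<sigma> \<rho> b c k s
    by unfold_locales auto
  show ?case
    using norm_integral_F_bound unfolding L_def F_def[abs_def] X_def W_def B_def .
qed

end
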